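(* Let $d,d'\in\mathbb{N}$, let $U\subseteq\mathbb{R}^{d+d'}$ and $W\subseteq\mathbb{R}^d$ be measurable sets, and let $(\mathbf g(w))_{w\in W}$ be an $\mathbb{R}^{d'}$-valued Lipschitz-continuous stochastic process. Suppose that for some constants $C,\rho\in(0,\infty)$ one has for every $(w,v)\in U\cap(W\times\mathbb{R}^{d'})$ that the distribution of $\mathbf g(w)$ restricted to the ball $B_{\mathbb{R}^{d'}}(v,\rho)$ is absolutely continuous with respect to Lebesgue measure with density bounded by $C$. If $\mathcal{H}_{d'}(U)=0$, then \[ \mathbb{P}\bigl(\exists\,w\in W:\ (w,\mathbf g(w))\in U\bigr)=0. \]
   Context: $\mathcal{H}_{d'}$ denotes the $d'$-dimensional Hausdorff measure on $\mathbb{R}^{d+d'}$. *)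

theory Defs
  imports "HOL-Analysis.Analysis" "HOL-Probability.Probability"
begin

definition hausdorff_term :: "real \<Rightarrow> 'a::metric_space set \<Rightarrow> real" where
  "hausdorff_term s C = (if C = {} then 0 else if s = 0 then 1 else diameter C powr s)"

definition hausdorff_pre :: "real \<Rightarrow> real \<Rightarrow> 'a::metric_space set \<Rightarrow> ennreal" where
  "hausdorff_pre s \<delta> A =
     (INF C \<in> {C :: nat \<Rightarrow> 'a set. A \<subseteq> (\<Union>i. C i) \<and> (\<forall>i. bounded (C i) \<and> diameter (C i) \<le> \<delta>)}.
        (\<Sum>i. ennreal (hausdorff_term s (C i))))"

text \<open>s-dimensional Hausdorff (outer) measure, with the standard normalisation
  omega_s / 2^s, omega_s = pi^(s/2) / Gamma(s/2 + 1).\<close>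
definition hausdorff_measure :: "real \<Rightarrow> 'a::metric_space set \<Rightarrow> ennreal" where
  "hausdorff_measure s A =
     ennreal (pi powr (s / 2) / (Gamma (s / 2 + 1) * 2 powr s)) * (SUP \<delta> \<in> {0<..}. hausdorff_pre s \<delta> A)"

end

theory Submission
  imports Defs
begin

text \<open>Cover \<open>U\<close> by sets \<open>S\<^sub>i\<close> of small diameter with \<open>\<Sum>\<^sub>i diam(S\<^sub>i)\<^sup>d\<^sup>'\<close> small, and fix
  reference points \<open>(w\<^sub>i, v\<^sub>i) \<in> S\<^sub>i \<inter> U\<close> with \<open>w\<^sub>i \<in> W\<close>. If the path \<open>g(\<cdot>, \<omega>)\<close> is
  \<open>K\<close>-Lipschitz and its graph meets \<open>S\<^sub>i\<close>, then \<open>g(w\<^sub>i, \<omega>)\<close> lies in the ball of radius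
  \<open>(K + 1) diam(S\<^sub>i)\<close> around \<open>v\<^sub>i\<close>; by the density bound this has probability at most
  \<open>C (K + 1)\<^sup>d\<^sup>' diam(S\<^sub>i)\<^sup>d\<^sup>'\<close> times the volume of the unit ball. Hence for each
  \<open>K \<in> \<nat>\<close> this event has outer probability zero, and these events exhaust the event
  in question.\<close>

definition lipschitz_hitting_event ::
    "'m measure \<Rightarrow> real \<Rightarrow> 'a::metric_space set \<Rightarrow> ('a \<Rightarrow> 'm \<Rightarrow> 'b::metric_space) \<Rightarrow> ('a \<times> 'b) set \<Rightarrow> 'm set"
  where "lipschitz_hitting_event M K W g T =
    {\<omega> \<in> space M. K-lipschitz_on W (\<lambda>w. g w \<omega>) \<and> (\<exists>w \<in> W. (w, g w \<omega>) \<in> T)}"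

definition density_bounded_on :: "'m measure \<Rightarrow> ('m \<Rightarrow> 'b::euclidean_space) \<Rightarrow> real \<Rightarrow> 'b set \<Rightarrow> bool"
  where "density_bounded_on M X C B \<longleftrightarrow>
    (\<exists>f \<in> borel_measurable lborel. (\<forall>x. 0 \<le> f x \<and> f x \<le> C) \<and>
       (\<forall>A \<in> sets borel. A \<subseteq> B \<longrightarrow>
          emeasure M {\<omega> \<in> space M. X \<omega> \<in> A} = (\<integral>\<^sup>+ x. ennreal (f x) * indicator A x \<partial>lborel)))"

lemma hausdorff_measure_zero_small_cover:
  fixes U :: "'a::metric_space set"
  assumes "hausdorff_measure s U = 0" and "0 \<le> s" and "0 < \<delta>" and "0 < \<epsilon>"
  obtains S where "U \<subseteq> (\<Union>i. S i)" and "\<And>i. bounded (S i)" and "\<And>i. diameter (S i) \<le> \<delta>"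
    and "(\<Sum>i. ennreal (hausdorff_term s (S i))) < ennreal \<epsilon>"
proof -
  have "pi powr (s / 2) / (Gamma (s / 2 + 1) * 2 powr s) > 0"
    using \<open>0 \<le> s\<close> by (intro divide_pos_pos mult_pos_pos) auto
  then have "(SUP \<delta> \<in> {0<..}. hausdorff_pre s \<delta> U) = 0"
    using assms(1) unfolding hausdorff_measure_def by (simp add: ennreal_eq_0_iff)
  then have "hausdorff_pre s \<delta> U = 0"
    using \<open>0 < \<delta>\<close> by (metis SUP_upper greaterThan_iff le_zero_eq)
  then have "hausdorff_pre s \<delta> U < ennreal \<epsilon>"
    using \<open>0 < \<epsilon>\<close> by simp
  then show ?thesis
    using that unfolding hausdorff_pre_def INF_less_iff by blast
qed

lemma hausdorff_term_nonneg [simp]: "0 \<le> hausdorff_term s S"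
  by (simp add: hausdorff_term_def)

lemma hausdorff_term_of_nat:
  assumes "bounded S" and "0 < n"
  shows "hausdorff_term (real n) S = diameter S ^ n"
  using assms diameter_ge_0[OF \<open>bounded S\<close>]
  by (cases "diameter S = 0") (auto simp: hausdorff_term_def powr_realpow)

lemma emeasure_cball_le_density_bound:
  fixes X :: "'m \<Rightarrow> 'b::euclidean_space"
  assumes "density_bounded_on M X C (ball v \<rho>)" and "0 \<le> r" and "r < \<rho>"
  shows "emeasure M {\<omega> \<in> space M. X \<omega> \<in> cball v r} \<le> ennreal (C * unit_ball_vol DIM('b) * r ^ DIM('b))"
proof -
  obtain f where f: "\<And>x. 0 \<le> f x \<and> f x \<le> C"
    and density: "\<And>A. A \<in> sets borel \<Longrightarrow> A \<subseteq> ball v \<rho> \<Longrightarrow>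
      emeasure M {\<omega> \<in> space M. X \<omega> \<in> A} = (\<integral>\<^sup>+ x. ennreal (f x) * indicator A x \<partial>lborel)"
    using assms(1) unfolding density_bounded_on_def by blast
  have "0 \<le> C"
    using f order_trans by blast
  have "emeasure M {\<omega> \<in> space M. X \<omega> \<in> cball v r} = (\<integral>\<^sup>+ x. ennreal (f x) * indicator (cball v r) x \<partial>lborel)"
    using \<open>r < \<rho>\<close> by (intro density) auto
  also have "\<dots> \<le> (\<integral>\<^sup>+ x. ennreal C * indicator (cball v r) x \<partial>lborel)"
    using f by (intro nn_integral_mono) (auto simp: indicator_def intro: ennreal_leI)
  also have "\<dots> = ennreal C * emeasure lborel (cball v r)"
    by (rule nn_integral_cmult_indicator) simp
  also have "\<dots> = ennreal (C * unit_ball_vol DIM('b) * r ^ DIM('b))"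
    using \<open>0 \<le> C\<close> \<open>0 \<le> r\<close> by (simp add: emeasure_cball ennreal_mult mult.assoc)
  finally show ?thesis .
qed

lemma lipschitz_graph_near_reference_point:
  assumes "K-lipschitz_on W h" and "bounded S"
    and "w \<in> W" and "(w, h w) \<in> S" and "w\<^sub>0 \<in> W" and "(w\<^sub>0, v\<^sub>0) \<in> S"
  shows "dist (h w\<^sub>0) v\<^sub>0 \<le> (K + 1) * diameter S"
proof -
  have diam: "dist (w, h w) (w\<^sub>0, v\<^sub>0) \<le> diameter S"
    using assms(2,4,6) by (rule diameter_bounded_bound)
  have "dist (h w\<^sub>0) v\<^sub>0 \<le> dist (h w\<^sub>0) (h w) + dist (h w) v\<^sub>0"
    by (rule dist_triangle)
  also have "\<dots> \<le> K * dist w\<^sub>0 w + dist (h w) v\<^sub>0"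
    using lipschitz_onD[OF assms(1,5,3)] by simp
  also have "\<dots> \<le> K * diameter S + diameter S"
    using diam dist_fst_le[of "(w, h w)" "(w\<^sub>0, v\<^sub>0)"] dist_snd_le[of "(w, h w)" "(w\<^sub>0, v\<^sub>0)"]
      lipschitz_on_nonneg[OF assms(1)]
    by (intro add_mono mult_left_mono) (auto simp: dist_commute)
  finally show ?thesis
    by (simp add: algebra_simps)
qed

lemma null_sets_cover_of_small_covers:
  assumes "A \<subseteq> space M" and small: "\<And>e. 0 < e \<Longrightarrow> \<exists>N \<in> sets M. A \<subseteq> N \<and> emeasure M N \<le> ennreal e"
  shows "\<exists>N \<in> null_sets M. A \<subseteq> N"
proof -
  have "outer_measure_of M A \<le> 0"
  proof (rule ennreal_le_epsilon)
    fix e :: real assume "0 < e"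
    then obtain N where "N \<in> sets M" "A \<subseteq> N" "emeasure M N \<le> ennreal e"
      using small by blast
    then show "outer_measure_of M A \<le> 0 + ennreal e"
      unfolding outer_measure_of_def by (auto intro: INF_lower2)
  qed
  then show ?thesis
    using outer_measure_of_attain[OF \<open>A \<subseteq> space M\<close>] by (auto simp: null_sets_def)
qed

lemma emeasure_UN_le_scaled_suminf:
  assumes "\<And>i. N i \<in> sets M" and "\<And>i. emeasure M (N i) \<le> ennreal (c * a i)"
    and "0 \<le> c" and "\<And>i. 0 \<le> a i"
  shows "emeasure M (\<Union>i. N i) \<le> ennreal c * (\<Sum>i. ennreal (a i))"
proof -
  have "emeasure M (\<Union>i. N i) \<le> (\<Sum>i. emeasure M (N i))"
    using assms(1) by (intro emeasure_subadditive_countably) auto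
  also have "\<dots> \<le> (\<Sum>i. ennreal c * ennreal (a i))"
    using assms(2-4) by (intro suminf_le) (auto simp: ennreal_mult)
  finally show ?thesis
    by simp
qed

lemma lipschitz_hitting_event_piece_bound:
  fixes g :: "'a::metric_space \<Rightarrow> 'm \<Rightarrow> 'b::euclidean_space"
  assumes g_measurable: "\<And>w. w \<in> W \<Longrightarrow> g w \<in> borel_measurable M"
    and density: "\<And>w v. (w, v) \<in> U \<Longrightarrow> w \<in> W \<Longrightarrow> density_bounded_on M (g w) C (ball v \<rho>)"
    and "bounded S" and "0 \<le> K" and "(K + 1) * diameter S < \<rho>"
  obtains N where "N \<in> sets M" and "lipschitz_hitting_event M K W g (S \<inter> U) \<subseteq> N"
    and "emeasure M N \<le> ennreal (C * unit_ball_vol DIM('b) * (K + 1) ^ DIM('b) * hausdorff_term DIM('b) S)"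
proof (cases "\<exists>w\<^sub>0 v\<^sub>0. (w\<^sub>0, v\<^sub>0) \<in> S \<inter> U \<and> w\<^sub>0 \<in> W")
  case True
  then obtain w\<^sub>0 v\<^sub>0 where ref: "(w\<^sub>0, v\<^sub>0) \<in> S" "(w\<^sub>0, v\<^sub>0) \<in> U" "w\<^sub>0 \<in> W"
    by blast
  define r where "r = (K + 1) * diameter S"
  have "0 \<le> r"
    unfolding r_def using \<open>0 \<le> K\<close> diameter_ge_0[OF \<open>bounded S\<close>] by simp
  have "r < \<rho>"
    unfolding r_def by (rule assms(5))
  show ?thesis
  proof (rule that)
    show "{\<omega> \<in> space M. g w\<^sub>0 \<omega> \<in> cball v\<^sub>0 r} \<in> sets M"
      using measurable_sets[OF g_measurable[OF ref(3)], of "cball v\<^sub>0 r"]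
      by (simp add: vimage_def Int_def conj_commute)
    show "lipschitz_hitting_event M K W g (S \<inter> U) \<subseteq> {\<omega> \<in> space M. g w\<^sub>0 \<omega> \<in> cball v\<^sub>0 r}"
      using lipschitz_graph_near_reference_point[OF _ \<open>bounded S\<close> _ _ ref(3,1)]
      by (auto simp: lipschitz_hitting_event_def r_def dist_commute)
    have "emeasure M {\<omega> \<in> space M. g w\<^sub>0 \<omega> \<in> cball v\<^sub>0 r} \<le> ennreal (C * unit_ball_vol DIM('b) * r ^ DIM('b))"
      using density[OF ref(2,3)] \<open>0 \<le> r\<close> \<open>r < \<rho>\<close> by (rule emeasure_cball_le_density_bound)
    then show "emeasure M {\<omega> \<in> space M. g w\<^sub>0 \<omega> \<in> cball v\<^sub>0 r}
        \<le> ennreal (C * unit_ball_vol DIM('b) * (K + 1) ^ DIM('b) * hausdorff_term DIM('b) S)"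
      by (simp add: hausdorff_term_of_nat[OF \<open>bounded S\<close>] r_def power_mult_distrib mult.assoc)
  qed
next
  case False
  then show ?thesis
    by (intro that[of "{}"]) (auto simp: lipschitz_hitting_event_def)
qed

lemma lipschitz_hitting_event_small:
  fixes g :: "'a::metric_space \<Rightarrow> 'm \<Rightarrow> 'b::euclidean_space"
  assumes g_measurable: "\<And>w. w \<in> W \<Longrightarrow> g w \<in> borel_measurable M"
    and density: "\<And>w v. (w, v) \<in> U \<Longrightarrow> w \<in> W \<Longrightarrow> density_bounded_on M (g w) C (ball v \<rho>)"
    and "hausdorff_measure DIM('b) U = 0" and "0 < C" and "0 < \<rho>" and "0 \<le> K" and "0 < e"
  shows "\<exists>N \<in> sets M. lipschitz_hitting_event M K W g U \<subseteq> N \<and> emeasure M N \<le> ennreal e"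
proof -
  define c where "c = C * unit_ball_vol DIM('b) * (K + 1) ^ DIM('b)"
  have "0 < c"
    unfolding c_def using \<open>0 < C\<close> \<open>0 \<le> K\<close> by simp
  define \<delta> where "\<delta> = \<rho> / (2 * (K + 1))"
  have "0 < \<delta>" and "(K + 1) * \<delta> < \<rho>"
    unfolding \<delta>_def using \<open>0 < \<rho>\<close> \<open>0 \<le> K\<close> by (auto simp: field_simps add_pos_nonneg)
  have "0 < e / c"
    using \<open>0 < e\<close> \<open>0 < c\<close> by simp
  then obtain S where cover: "U \<subseteq> (\<Union>i. S i)" and S_bounded: "\<And>i. bounded (S i)"
    and small: "\<And>i. diameter (S i) \<le> \<delta>"
    and sum: "(\<Sum>i. ennreal (hausdorff_term DIM('b) (S i))) < ennreal (e / c)"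
    using hausdorff_measure_zero_small_cover[OF assms(3) of_nat_0_le_iff \<open>0 < \<delta>\<close>] by blast
  have "\<exists>N. N \<in> sets M \<and> lipschitz_hitting_event M K W g (S i \<inter> U) \<subseteq> N
      \<and> emeasure M N \<le> ennreal (c * hausdorff_term DIM('b) (S i))" for i
  proof -
    have "(K + 1) * diameter (S i) \<le> (K + 1) * \<delta>"
      using small \<open>0 \<le> K\<close> by (intro mult_left_mono) auto
    then have "(K + 1) * diameter (S i) < \<rho>"
      using \<open>(K + 1) * \<delta> < \<rho>\<close> by linarith
    from lipschitz_hitting_event_piece_bound[where g = g and W = W and U = U,
        OF g_measurable density S_bounded \<open>0 \<le> K\<close> this]
    show ?thesis
      unfolding c_def by blast
  qed
  then obtain N where N: "\<And>i. N i \<in> sets M"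
    and hits: "\<And>i. lipschitz_hitting_event M K W g (S i \<inter> U) \<subseteq> N i"
    and bound: "\<And>i. emeasure M (N i) \<le> ennreal (c * hausdorff_term DIM('b) (S i))"
    by metis
  have "lipschitz_hitting_event M K W g U \<subseteq> (\<Union>i. N i)"
    using cover hits unfolding lipschitz_hitting_event_def by blast
  moreover have "emeasure M (\<Union>i. N i) \<le> ennreal e"
  proof -
    have "emeasure M (\<Union>i. N i) \<le> ennreal c * (\<Sum>i. ennreal (hausdorff_term DIM('b) (S i)))"
      using N bound \<open>0 < c\<close> by (intro emeasure_UN_le_scaled_suminf) auto
    also have "\<dots> \<le> ennreal c * ennreal (e / c)"
      using sum by (intro mult_left_mono) auto
    also have "\<dots> = ennreal e"
      using \<open>0 < c\<close> \<open>0 < e\<close> by (simp flip: ennreal_mult)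
    finally show ?thesis .
  qed
  ultimately show ?thesis
    using N by blast
qed

lemma lipschitz_hitting_events_exhaust:
  assumes "\<And>\<omega>. \<omega> \<in> space M \<Longrightarrow> \<exists>L. L-lipschitz_on W (\<lambda>w. g w \<omega>)"
  shows "{\<omega> \<in> space M. \<exists>w \<in> W. (w, g w \<omega>) \<in> T} \<subseteq> (\<Union>K::nat. lipschitz_hitting_event M K W g T)"
proof safe
  fix \<omega> w assume "\<omega> \<in> space M" "w \<in> W" "(w, g w \<omega>) \<in> T"
  moreover obtain L where "L-lipschitz_on W (\<lambda>w. g w \<omega>)"
    using assms[OF \<open>\<omega> \<in> space M\<close>] by blast
  then have "(real (nat \<lceil>L\<rceil>))-lipschitz_on W (\<lambda>w. g w \<omega>)"
    by (rule lipschitz_on_le) linarith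
  ultimately have "\<omega> \<in> lipschitz_hitting_event M (nat \<lceil>L\<rceil>) W g T"
    unfolding lipschitz_hitting_event_def by blast
  then show "\<omega> \<in> (\<Union>K::nat. lipschitz_hitting_event M K W g T)"
    by blast
qed

theorem lemma2p6:
  fixes M :: "'m measure"
    and U :: "('a::euclidean_space \<times> 'b::euclidean_space) set"
    and W :: "'a set"
    and g :: "'a \<Rightarrow> 'm \<Rightarrow> 'b"
    and C \<rho> :: real
  assumes "prob_space M"
    and "U \<in> sets lebesgue"
    and "W \<in> sets lebesgue"
    and "\<And>w. w \<in> W \<Longrightarrow> g w \<in> borel_measurable M"
    and "\<And>\<omega>. \<omega> \<in> space M \<Longrightarrow> \<exists>L. L-lipschitz_on W (\<lambda>w. g w \<omega>)"
    and "0 < C" and "0 < \<rho>"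
    and "\<And>w v. (w, v) \<in> U \<Longrightarrow> w \<in> W \<Longrightarrow>
           \<exists>f \<in> borel_measurable lborel. (\<forall>x. 0 \<le> f x \<and> f x \<le> C) \<and>
             (\<forall>A \<in> sets borel. A \<subseteq> ball v \<rho> \<longrightarrow>
                emeasure M {\<omega> \<in> space M. g w \<omega> \<in> A} = (\<integral>\<^sup>+ x. ennreal (f x) * indicator A x \<partial>lborel))"
    and "hausdorff_measure (real DIM('b)) U = 0"
  shows "\<exists>N \<in> null_sets M. {\<omega> \<in> space M. \<exists>w \<in> W. (w, g w \<omega>) \<in> U} \<subseteq> N"
proof -
  have density: "\<And>w v. (w, v) \<in> U \<Longrightarrow> w \<in> W \<Longrightarrow> density_bounded_on M (g w) C (ball v \<rho>)"
    using assms(8) unfolding density_bounded_on_def .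
  have "\<exists>N \<in> null_sets M. lipschitz_hitting_event M K W g U \<subseteq> N" for K :: nat
    by (intro null_sets_cover_of_small_covers
        lipschitz_hitting_event_small[where g = g and W = W and U = U, OF assms(4) density assms(9,6,7)])
      (auto simp: lipschitz_hitting_event_def)
  then obtain N :: "nat \<Rightarrow> 'm set" where N_null: "\<And>K. N K \<in> null_sets M"
    and hits: "\<And>K. lipschitz_hitting_event M K W g U \<subseteq> N K"
    by metis
  have "{\<omega> \<in> space M. \<exists>w \<in> W. (w, g w \<omega>) \<in> U} \<subseteq> (\<Union>K::nat. lipschitz_hitting_event M K W g U)"
    using assms(5) by (rule lipschitz_hitting_events_exhaust)
  also have "\<dots> \<subseteq> (\<Union>K. N K)"
    using hits by blast
  finally have "{\<omega> \<in> space M. \<exists>w \<in> W. (w, g w \<omega>) \<in> U} \<subseteq> (\<Union>K. N K)" .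
  moreover have "(\<Union>K. N K) \<in> null_sets M"
    using N_null by (rule null_sets_UN)
  ultimately show ?thesis
    by (rule bexI)
qed

end
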